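(* Let $(\mathcal{A},v)$ be a valued abelian group and $A_1,\dots,A_n$ subgroups of $\mathcal{A}$. The sum $A_1+\dots+A_n\subseteq\mathcal{A}$ is pseudo-direct if and only if the group homomorphism $f:A_1\times\dots\times A_n\to A_1+\dots+A_n$, $f(a_1,\dots,a_n)=a_1+\dots+a_n$, is immediate, where $A_1\times\dots\times A_n$ carries the minimum valuation $v(a_1,\dots,a_n)=\min_i va_i$ and $A_1+\dots+A_n$ the restriction of $v$.
   Context: A valued abelian group $(G,v)$ is an abelian group with a map $v$ onto $vG\cup\{\infty\}$ ($vG$ totally ordered, $\infty$ maximal) with $va=\infty$ iff $a=0$ and $v(a-b)\ge\min\{va,vb\}$; it is an ultrametric space via $u(a,b)=v(a-b)$. The sum $A_1+\dots+A_n$ is pseudo-direct if for every nonzero $a'\in A_1+\dots+A_n$ there are $a_i\in A_i$ with $v\sum_{i=1}^na_i=\min_iva_i$ and $v(a'-\sum_{i=1}^na_i)>va'$. For a map $g$ of ultrametric spaces, with $B(x,y)=\{z:u(x,z)\ge u(x,y)\}$, $z'$ is an attractor if for every $y$ with $z'\ne gy$ there is $z$ with $u'(gz,z')>u'(gy,z')$ and $g(B(y,z))\subseteq B(gy,z')$; $g$ is immediate if every point of the target is an attractor. *)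

theory Defs
  imports Main
begin

definition valued_ab_group :: "('a::ab_group_add \<Rightarrow> 'b::{linorder,order_top}) \<Rightarrow> bool" where
  "valued_ab_group v \<longleftrightarrow> (\<forall>a. v a = top \<longleftrightarrow> a = 0) \<and> (\<forall>a b. min (v a) (v b) \<le> v (a - b))"

definition subgroup_of :: "'a::ab_group_add set \<Rightarrow> bool" where
  "subgroup_of A \<longleftrightarrow> 0 \<in> A \<and> (\<forall>a\<in>A. \<forall>b\<in>A. a - b \<in> A)"

text \<open>Tuples (a_1,...,a_n) are functions on nat, indices 0..n-1, extended by 0.\<close>
definition prod_carrier :: "(nat \<Rightarrow> 'a::ab_group_add set) \<Rightarrow> nat \<Rightarrow> (nat \<Rightarrow> 'a) set" where
  "prod_carrier A n = {x. (\<forall>i<n. x i \<in> A i) \<and> (\<forall>i\<ge>n. x i = 0)}"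

text \<open>Minimum valuation min_i v(a_i) (equal to \<infinity> for the empty product).\<close>
definition prod_val :: "('a \<Rightarrow> 'b::{linorder,order_top}) \<Rightarrow> nat \<Rightarrow> (nat \<Rightarrow> 'a) \<Rightarrow> 'b" where
  "prod_val v n x = Min (insert top ((\<lambda>i. v (x i)) ` {..<n}))"

definition sum_set :: "(nat \<Rightarrow> 'a::ab_group_add set) \<Rightarrow> nat \<Rightarrow> 'a set" where
  "sum_set A n = {(\<Sum>i<n. x i) | x. \<forall>i<n. x i \<in> A i}"

definition pseudo_direct :: "('a::ab_group_add \<Rightarrow> 'b::{linorder,order_top}) \<Rightarrow> (nat \<Rightarrow> 'a set) \<Rightarrow> nat \<Rightarrow> bool" where
  "pseudo_direct v A n \<longleftrightarrow>
     (\<forall>a'\<in>sum_set A n. a' \<noteq> 0 \<longrightarrow>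
        (\<exists>x. (\<forall>i<n. x i \<in> A i) \<and> v (\<Sum>i<n. x i) = prod_val v n x
             \<and> v a' < v (a' - (\<Sum>i<n. x i))))"

definition um_ball :: "'x set \<Rightarrow> ('x \<Rightarrow> 'x \<Rightarrow> 'b::linorder) \<Rightarrow> 'x \<Rightarrow> 'x \<Rightarrow> 'x set" where
  "um_ball X u x y = {z\<in>X. u x y \<le> u x z}"

definition attractor ::
  "'x set \<Rightarrow> ('x \<Rightarrow> 'x \<Rightarrow> 'b::linorder) \<Rightarrow> 'y set \<Rightarrow> ('y \<Rightarrow> 'y \<Rightarrow> 'b) \<Rightarrow> ('x \<Rightarrow> 'y) \<Rightarrow> 'y \<Rightarrow> bool" where
  "attractor X u Y u' g z' \<longleftrightarrow>
     (\<forall>y\<in>X. z' \<noteq> g y \<longrightarrow>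
        (\<exists>z\<in>X. u' (g y) z' < u' (g z) z' \<and> g ` um_ball X u y z \<subseteq> um_ball Y u' (g y) z'))"

definition immediate ::
  "'x set \<Rightarrow> ('x \<Rightarrow> 'x \<Rightarrow> 'b::linorder) \<Rightarrow> 'y set \<Rightarrow> ('y \<Rightarrow> 'y \<Rightarrow> 'b) \<Rightarrow> ('x \<Rightarrow> 'y) \<Rightarrow> bool" where
  "immediate X u Y u' g \<longleftrightarrow> (\<forall>z'\<in>Y. attractor X u Y u' g z')"

end

theory Submission
  imports Defs
begin

text \<open>Write \<open>f\<close> for the sum map and \<open>u\<close> for the minimum valuation of the product.
  If the sum is pseudo-direct and \<open>z' \<noteq> f y\<close>, approximate \<open>a' = z' - f y\<close> by a
  tuple \<open>x\<close> with \<open>v (f x) = u x\<close>; then \<open>z = y + x\<close> is closer to \<open>z'\<close>, and since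
  \<open>v (f w) \<ge> u w\<close> always holds, \<open>f\<close> maps the ball \<open>B(y, z)\<close>, of radius \<open>u x = v a'\<close>,
  into \<open>B(f y, z')\<close>.  Conversely, if \<open>f\<close> is immediate, apply the attractor property
  of \<open>a'\<close> at the base point \<open>0\<close>: the resulting \<open>z\<close> has \<open>v (a' - f z) > v a' = v (f z)\<close>,
  and testing the ball inclusion on the tuples with a single nonzero entry \<open>z i\<close>
  shows \<open>v (z i) \<ge> v a'\<close> for all \<open>i\<close>, whence \<open>u z = v (f z)\<close>.\<close>

locale valued_group =
  fixes v :: "'a::ab_group_add \<Rightarrow> 'b::{linorder,order_top}"
  assumes valued: "valued_ab_group v"
begin

lemma valuation_zero [simp]: "v 0 = top"
  using valued unfolding valued_ab_group_def by blast

lemma valuation_diff: "min (v a) (v b) \<le> v (a - b)"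
  using valued unfolding valued_ab_group_def by blast

lemma valuation_minus [simp]: "v (- a) = v a"
  using valuation_diff[of 0 a] valuation_diff[of 0 "- a"] by simp

lemma valuation_add: "min (v a) (v b) \<le> v (a + b)"
  using valuation_diff[of a "- b"] by simp

lemma valuation_diff_commute: "v (a - b) = v (b - a)"
  using valuation_minus[of "a - b"] by simp

lemma valuation_eq_if_less_diff:
  assumes "v a < v (a - b)"
  shows "v b = v a"
proof -
  have "v a \<le> v b"
    using valuation_diff[of a "a - b"] assms by simp
  moreover have "v b \<le> v a"
    using valuation_add[of "a - b" b] assms by (simp add: min_def split: if_splits)
  ultimately show ?thesis by simp
qed

lemma prod_val_ge_iff: "m \<le> prod_val v n x \<longleftrightarrow> (\<forall>i<n. m \<le> v (x i))"
  unfolding prod_val_def by (subst Min_ge_iff) auto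

lemma prod_val_le: "i < n \<Longrightarrow> prod_val v n x \<le> v (x i)"
  using prod_val_ge_iff by blast

lemma prod_val_cong:
  "(\<And>i. i < n \<Longrightarrow> v (x i) = v (y i)) \<Longrightarrow> prod_val v n x = prod_val v n y"
  unfolding prod_val_def by (metis (mono_tags, lifting) image_cong lessThan_iff)

lemma prod_val_single:
  assumes "i < n"
  shows "prod_val v n (\<lambda>j. if j = i then a else 0) = v a"
proof (rule order.antisym)
  show "prod_val v n (\<lambda>j. if j = i then a else 0) \<le> v a"
    using prod_val_le[OF assms, of "\<lambda>j. if j = i then a else 0"] by simp
  show "v a \<le> prod_val v n (\<lambda>j. if j = i then a else 0)"
    by (simp add: prod_val_ge_iff)
qed

lemma prod_val_le_valuation_sum: "prod_val v n x \<le> v (\<Sum>i<n. x i)"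
proof (induction n)
  case 0
  then show ?case by simp
next
  case (Suc n)
  have "prod_val v (Suc n) x \<le> prod_val v n x"
    using prod_val_ge_iff[of _ n x] prod_val_le[of _ "Suc n" x] by simp
  then have "prod_val v (Suc n) x \<le> min (v (\<Sum>i<n. x i)) (v (x n))"
    using Suc.IH prod_val_le[of n "Suc n" x] by simp
  also have "\<dots> \<le> v (\<Sum>i<Suc n. x i)"
    using valuation_add by simp
  finally show ?case .
qed

lemma valuation_sum_diff_ge:
  "m \<le> prod_val v n (\<lambda>i. x i - y i) \<Longrightarrow> m \<le> v ((\<Sum>i<n. x i) - (\<Sum>i<n. y i))"
  using prod_val_le_valuation_sum[of n "\<lambda>i. x i - y i"] by (simp add: sum_subtractf)

end

lemma subgroup_zero: "subgroup_of A \<Longrightarrow> 0 \<in> A"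
  unfolding subgroup_of_def by blast

lemma subgroup_diff: "subgroup_of A \<Longrightarrow> a \<in> A \<Longrightarrow> b \<in> A \<Longrightarrow> a - b \<in> A"
  unfolding subgroup_of_def by blast

lemma subgroup_add: "subgroup_of A \<Longrightarrow> a \<in> A \<Longrightarrow> b \<in> A \<Longrightarrow> a + b \<in> A"
  using subgroup_diff[of A a "- b"] subgroup_diff[of A 0 b] subgroup_zero[of A] by simp

lemma sum_in_sum_set: "x \<in> prod_carrier A n \<Longrightarrow> (\<Sum>i<n. x i) \<in> sum_set A n"
  unfolding prod_carrier_def sum_set_def by blast

lemma sum_set_diff:
  assumes "\<forall>i<n. subgroup_of (A i)" and "a \<in> sum_set A n" and "b \<in> sum_set A n"
  shows "a - b \<in> sum_set A n"
proof -
  obtain x y where "\<forall>i<n. x i \<in> A i" "\<forall>i<n. y i \<in> A i"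
    and "a = (\<Sum>i<n. x i)" "b = (\<Sum>i<n. y i)"
    using assms(2,3) unfolding sum_set_def by blast
  then have "a - b = (\<Sum>i<n. x i - y i)" and "\<forall>i<n. x i - y i \<in> A i"
    using assms(1) by (auto simp: sum_subtractf subgroup_diff)
  then show ?thesis unfolding sum_set_def by blast
qed

lemma zero_in_prod_carrier: "\<forall>i<n. subgroup_of (A i) \<Longrightarrow> (\<lambda>i. 0) \<in> prod_carrier A n"
  unfolding prod_carrier_def by (auto intro: subgroup_zero)

lemma single_in_prod_carrier:
  "\<forall>i<n. subgroup_of (A i) \<Longrightarrow> i < n \<Longrightarrow> a \<in> A i \<Longrightarrow>
    (\<lambda>j. if j = i then a else 0) \<in> prod_carrier A n"
  unfolding prod_carrier_def by (auto intro: subgroup_zero)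

context valued_group
begin

lemma pseudo_direct_imp_attractor:
  assumes subgroups: "\<forall>i<n. subgroup_of (A i)"
    and pd: "pseudo_direct v A n" and z': "z' \<in> sum_set A n"
  shows "attractor (prod_carrier A n) (\<lambda>x y. prod_val v n (\<lambda>i. x i - y i))
           (sum_set A n) (\<lambda>a b. v (a - b)) (\<lambda>x. \<Sum>i<n. x i) z'"
  unfolding attractor_def
proof (intro ballI impI)
  fix y
  assume y: "y \<in> prod_carrier A n" and ne: "z' \<noteq> (\<Sum>i<n. y i)"
  define a' where "a' = z' - (\<Sum>i<n. y i)"
  have "a' \<in> sum_set A n"
    unfolding a'_def using sum_set_diff[OF subgroups z' sum_in_sum_set[OF y]] .
  moreover have "a' \<noteq> 0" using ne unfolding a'_def by simp
  ultimately obtain x where x: "\<forall>i<n. x i \<in> A i"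
    and x_val: "v (\<Sum>i<n. x i) = prod_val v n x"
    and closer: "v a' < v (a' - (\<Sum>i<n. x i))"
    using pd unfolding pseudo_direct_def by blast
  define z where "z = (\<lambda>i. if i < n then y i + x i else 0)"
  have z: "z \<in> prod_carrier A n"
    using x y subgroups unfolding z_def prod_carrier_def by (auto intro: subgroup_add)
  have dist_y_z': "v ((\<Sum>i<n. y i) - z') = v a'"
    unfolding a'_def by (rule valuation_diff_commute)
  have radius: "prod_val v n (\<lambda>i. y i - z i) = v a'"
  proof -
    have "prod_val v n (\<lambda>i. y i - z i) = prod_val v n x"
      by (rule prod_val_cong) (simp add: z_def)
    also have "\<dots> = v a'"
      using x_val valuation_eq_if_less_diff[OF closer] by simp
    finally show ?thesis .
  qed
  show "\<exists>z\<in>prod_carrier A n. v ((\<Sum>i<n. y i) - z') < v ((\<Sum>i<n. z i) - z') \<and>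
          (\<lambda>x. \<Sum>i<n. x i) ` um_ball (prod_carrier A n) (\<lambda>x y. prod_val v n (\<lambda>i. x i - y i)) y z
          \<subseteq> um_ball (sum_set A n) (\<lambda>a b. v (a - b)) (\<Sum>i<n. y i) z'"
  proof (intro bexI conjI)
    have "v ((\<Sum>i<n. z i) - z') = v (a' - (\<Sum>i<n. x i))"
      unfolding a'_def z_def
      by (subst valuation_diff_commute) (simp add: sum.distrib algebra_simps)
    then show "v ((\<Sum>i<n. y i) - z') < v ((\<Sum>i<n. z i) - z')"
      using closer dist_y_z' by simp
    show "(\<lambda>x. \<Sum>i<n. x i) ` um_ball (prod_carrier A n) (\<lambda>x y. prod_val v n (\<lambda>i. x i - y i)) y z
          \<subseteq> um_ball (sum_set A n) (\<lambda>a b. v (a - b)) (\<Sum>i<n. y i) z'"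
    proof (rule image_subsetI)
      fix w
      assume "w \<in> um_ball (prod_carrier A n) (\<lambda>x y. prod_val v n (\<lambda>i. x i - y i)) y z"
      then have w: "w \<in> prod_carrier A n" and "v a' \<le> prod_val v n (\<lambda>i. y i - w i)"
        unfolding um_ball_def radius by auto
      from this(2) have "v a' \<le> v ((\<Sum>i<n. y i) - (\<Sum>i<n. w i))"
        by (rule valuation_sum_diff_ge)
      then show "(\<Sum>i<n. w i) \<in> um_ball (sum_set A n) (\<lambda>a b. v (a - b)) (\<Sum>i<n. y i) z'"
        unfolding um_ball_def dist_y_z' using sum_in_sum_set[OF w] by simp
    qed
  qed (rule z)
qed

lemma immediate_imp_pseudo_direct:
  assumes subgroups: "\<forall>i<n. subgroup_of (A i)"
    and im: "immediate (prod_carrier A n) (\<lambda>x y. prod_val v n (\<lambda>i. x i - y i))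
              (sum_set A n) (\<lambda>a b. v (a - b)) (\<lambda>x. \<Sum>i<n. x i)"
  shows "pseudo_direct v A n"
  unfolding pseudo_direct_def
proof (intro ballI impI)
  fix a'
  assume a': "a' \<in> sum_set A n" and ne: "a' \<noteq> 0"
  obtain z where z: "z \<in> prod_carrier A n"
    and closer: "v (0 - a') < v ((\<Sum>i<n. z i) - a')"
    and ball: "(\<lambda>x. \<Sum>i<n. x i) ` um_ball (prod_carrier A n)
                 (\<lambda>x y. prod_val v n (\<lambda>i. x i - y i)) (\<lambda>i. 0) z
               \<subseteq> um_ball (sum_set A n) (\<lambda>a b. v (a - b)) 0 a'"
    using im a' ne zero_in_prod_carrier[OF subgroups]
    unfolding immediate_def attractor_def by force
  have closer': "v a' < v (a' - (\<Sum>i<n. z i))"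
    using closer valuation_diff_commute[of "\<Sum>i<n. z i" a'] by simp
  have components: "v a' \<le> v (z i)" if i: "i < n" for i
  proof -
    let ?e = "\<lambda>j. if j = i then z i else 0"
    have "?e \<in> prod_carrier A n"
      using single_in_prod_carrier[OF subgroups i] z i unfolding prod_carrier_def by blast
    moreover have "prod_val v n (\<lambda>j. 0 - z j) \<le> prod_val v n (\<lambda>j. 0 - ?e j)"
    proof -
      have "prod_val v n (\<lambda>j. 0 - z j) = prod_val v n z"
        by (rule prod_val_cong) simp
      also have "\<dots> \<le> v (z i)" by (rule prod_val_le[OF i])
      also have "\<dots> = prod_val v n ?e" by (rule prod_val_single[OF i, symmetric])
      also have "\<dots> = prod_val v n (\<lambda>j. 0 - ?e j)"
        by (rule prod_val_cong) simp
      finally show ?thesis .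
    qed
    ultimately have "(\<Sum>j<n. ?e j) \<in> um_ball (sum_set A n) (\<lambda>a b. v (a - b)) 0 a'"
      using ball unfolding um_ball_def by blast
    then show ?thesis
      using i by (simp add: um_ball_def sum.delta)
  qed
  have "v (\<Sum>i<n. z i) = prod_val v n z"
  proof (rule order.antisym)
    show "v (\<Sum>i<n. z i) \<le> prod_val v n z"
      using components valuation_eq_if_less_diff[OF closer'] by (simp add: prod_val_ge_iff)
  qed (rule prod_val_le_valuation_sum)
  moreover have "\<forall>i<n. z i \<in> A i" using z unfolding prod_carrier_def by simp
  ultimately show "\<exists>x. (\<forall>i<n. x i \<in> A i) \<and> v (\<Sum>i<n. x i) = prod_val v n x \<and>
                      v a' < v (a' - (\<Sum>i<n. x i))"
    using closer' by blast
qed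

end

theorem proposition64:
  fixes v :: "'a::ab_group_add \<Rightarrow> 'b::{linorder,order_top}"
    and A :: "nat \<Rightarrow> 'a set" and n :: nat
  assumes "valued_ab_group v"
    and "\<forall>i<n. subgroup_of (A i)"
  shows "pseudo_direct v A n \<longleftrightarrow>
    immediate (prod_carrier A n) (\<lambda>x y. prod_val v n (\<lambda>i. x i - y i))
              (sum_set A n) (\<lambda>a b. v (a - b))
              (\<lambda>x. \<Sum>i<n. x i)"
proof -
  interpret valued_group v by unfold_locales (rule assms(1))
  show ?thesis
  proof
    assume "pseudo_direct v A n"
    then show "immediate (prod_carrier A n) (\<lambda>x y. prod_val v n (\<lambda>i. x i - y i))
                 (sum_set A n) (\<lambda>a b. v (a - b)) (\<lambda>x. \<Sum>i<n. x i)"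
      unfolding immediate_def using pseudo_direct_imp_attractor[OF assms(2)] by blast
  qed (rule immediate_imp_pseudo_direct[OF assms(2)])
qed

end
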